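(* Consider Bertrand Competition with $n\ge 2$ firms, integer price floor $L\ge 2$ and integer reservation value $H>L$: each firm chooses an integer price in $\{L,\dots,H\}$; the firms choosing the lowest price $s$ split the sales equally, each such firm receiving $s/k$ where $k$ is the number of firms choosing $s$, and all other firms receive $0$. Cooperation means choosing $H$. Let $\beta\in[0,1]$ and $t\ge 0$, and define $f(n)=\sum_{k=0}^{n-1}\beta^k(1-\beta)^{n-1-k}\binom{n-1}{k}\frac{1}{n-k}$. Then cooperation for firm $i$ is consistent with type $(t,\beta)$ if and only if $$t\ \ge\ \max\big(\beta^{n-1}(H-1),\, f(n)L\big)-\beta^{n-1}H/n.$$
   Context: A pure strategy $s_i$ is consistent with a tolerance $t\ge 0$ and a mixed strategy profile $\sigma_{-i}$ of the other players if $u_i(s_i',\sigma_{-i})\le u_i(s_i,\sigma_{-i})+t$ for every pure strategy $s_i'$ of player $i$ (utilities extended by linearity). Cooperation is consistent with type $(t,\beta)$ for player $i$ if cooperation is consistent with $t$ and the profile $\sigma_{-i}$ in which each other firm independently plays $H$ (cooperation) with probability $\beta$ and $L$ (its Nash equilibrium action) with probability $1-\beta$. *)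

theory Defs
  imports Complex_Main "HOL-Library.FuncSet"
begin

definition bertrand_payoff :: "nat \<Rightarrow> (nat \<Rightarrow> int) \<Rightarrow> nat \<Rightarrow> real" where
  "bertrand_payoff n p i =
     (let s = Min (p ` {..<n}); k = card {j \<in> {..<n}. p j = s}
      in if p i = s then real_of_int s / real k else 0)"

definition exp_payoff :: "nat \<Rightarrow> int \<Rightarrow> int \<Rightarrow> real \<Rightarrow> nat \<Rightarrow> int \<Rightarrow> real" where
  "exp_payoff n L H beta i x =
     (\<Sum>q \<in> Pi\<^sub>E ({..<n} - {i}) (\<lambda>_. {L, H}).
        (\<Prod>j \<in> {..<n} - {i}. if q j = H then beta else 1 - beta)
        * bertrand_payoff n (q(i := x)) i)"

definition consistent :: "nat \<Rightarrow> int \<Rightarrow> int \<Rightarrow> real \<Rightarrow> real \<Rightarrow> nat \<Rightarrow> int \<Rightarrow> bool" where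
  "consistent n L H t beta i x \<longleftrightarrow>
     (\<forall>y \<in> {L..H}. exp_payoff n L H beta i y \<le> exp_payoff n L H beta i x + t)"

definition coop_consistent :: "nat \<Rightarrow> int \<Rightarrow> int \<Rightarrow> real \<Rightarrow> real \<Rightarrow> nat \<Rightarrow> bool" where
  "coop_consistent n L H t beta i \<longleftrightarrow> consistent n L H t beta i H"

definition fB :: "real \<Rightarrow> nat \<Rightarrow> real" where
  "fB beta n = (\<Sum>k=0..n-1. beta ^ k * (1 - beta) ^ (n - 1 - k) * real ((n - 1) choose k)
                               * (1 / real (n - k)))"

end

theory Submission imports Defs begin

text \<open>Against the mixed profile, a firm quoting the floor L is always among the cheapest
  firms and shares the market with the other firms at L, which gives the expected payoff
  f(n) L. A price y strictly above L earns something only when every other firm quotes H: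
  it yields \<beta>^(n-1) y for y < H and \<beta>^(n-1) H/n for y = H. The most
  profitable deviation from H is therefore worth max(\<beta>^(n-1) (H - 1), f(n) L); when
  H - 1 = L the first term is dominated by the second, since f(n) \<ge> \<beta>^(n-1).\<close>

text \<open>The value \<open>undefined\<close> outside A matches the extensional functions of \<open>Pi\<^sub>E\<close>.\<close>

definition high_low_profile :: "'a set \<Rightarrow> int \<Rightarrow> int \<Rightarrow> 'a set \<Rightarrow> 'a \<Rightarrow> int" where
  "high_low_profile A L H S = (\<lambda>j. if j \<in> A then (if j \<in> S then H else L) else undefined)"

lemma PiE_two_prices_eq_image_Pow:
  assumes "L \<noteq> H"
  shows "Pi\<^sub>E A (\<lambda>_. {L, H}) = high_low_profile A L H ` Pow A"
proof
  show "high_low_profile A L H ` Pow A \<subseteq> Pi\<^sub>E A (\<lambda>_. {L, H})"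
    by (auto simp: high_low_profile_def PiE_def extensional_def)
  show "Pi\<^sub>E A (\<lambda>_. {L, H}) \<subseteq> high_low_profile A L H ` Pow A"
  proof
    fix q assume q: "q \<in> Pi\<^sub>E A (\<lambda>_. {L, H})"
    have "q = high_low_profile A L H {j \<in> A. q j = H}"
      using q assms by (auto simp: high_low_profile_def PiE_def extensional_def fun_eq_iff)
    thus "q \<in> high_low_profile A L H ` Pow A" by blast
  qed
qed

lemma inj_on_high_low_profile:
  assumes "L \<noteq> H"
  shows "inj_on (high_low_profile A L H) (Pow A)"
proof (rule inj_onI)
  fix S T assume "S \<in> Pow A" "T \<in> Pow A" "high_low_profile A L H S = high_low_profile A L H T"
  then show "S = T" using assms unfolding high_low_profile_def fun_eq_iff
    by (metis (full_types) PowD subset_iff subset_antisym)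
qed

lemma prod_high_low_profile:
  assumes "finite A" "S \<subseteq> A" "L \<noteq> H"
  shows "(\<Prod>j \<in> A. if high_low_profile A L H S j = H then beta else 1 - beta)
       = beta ^ card S * (1 - beta) ^ (card A - card S)"
proof -
  have "(\<Prod>j \<in> A. if high_low_profile A L H S j = H then beta else 1 - beta)
      = (\<Prod>j \<in> A. if j \<in> S then beta else 1 - beta)"
    using assms by (intro prod.cong) (auto simp: high_low_profile_def)
  also have "\<dots> = beta ^ card (A \<inter> S) * (1 - beta) ^ card (A - S)"
    using assms(1) by (simp add: prod.If_cases Diff_eq)
  also have "\<dots> = beta ^ card S * (1 - beta) ^ (card A - card S)"
    using assms by (simp add: Int_absorb1 card_Diff_subset finite_subset)
  finally show ?thesis .
qed

lemma sum_Pow_card: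
  assumes "finite A"
  shows "(\<Sum>S \<in> Pow A. g (card S)) = (\<Sum>k=0..card A. of_nat (card A choose k) * (g k :: 'a::comm_semiring_1))"
proof -
  have "(\<Sum>S \<in> Pow A. g (card S)) = (\<Sum>k=0..card A. \<Sum>S \<in> {S. S \<in> Pow A \<and> card S = k}. g (card S))"
    using assms by (intro sum.group[symmetric]) (auto intro: card_mono)
  also have "\<dots> = (\<Sum>k=0..card A. \<Sum>S \<in> {S. S \<subseteq> A \<and> card S = k}. g k)"
    by (intro sum.cong) auto
  finally show ?thesis
    using n_subsets[OF assms] by (simp add: of_nat_mult)
qed

lemma exp_payoff_eq_sum_Pow:
  assumes "L \<noteq> H" "i < n"
  shows "exp_payoff n L H beta i x =
    (\<Sum>S \<in> Pow ({..<n} - {i}). beta ^ card S * (1 - beta) ^ (n - 1 - card S)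
        * bertrand_payoff n ((high_low_profile ({..<n} - {i}) L H S)(i := x)) i)"
proof -
  let ?A = "{..<n} - {i}"
  have "exp_payoff n L H beta i x = (\<Sum>S \<in> Pow ?A.
        (\<Prod>j \<in> ?A. if high_low_profile ?A L H S j = H then beta else 1 - beta)
        * bertrand_payoff n ((high_low_profile ?A L H S)(i := x)) i)"
    unfolding exp_payoff_def PiE_two_prices_eq_image_Pow[OF assms(1)]
    by (simp add: sum.reindex[OF inj_on_high_low_profile[OF assms(1)]])
  then show ?thesis
    using assms by (simp add: prod_high_low_profile)
qed

lemma bertrand_payoff_floor:
  assumes "S \<subseteq> {..<n} - {i}" "i < n" "L < H"
  shows "bertrand_payoff n ((high_low_profile ({..<n} - {i}) L H S)(i := L)) i
       = real_of_int L / real (n - card S)"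
proof -
  let ?p = "(high_low_profile ({..<n} - {i}) L H S)(i := L)"
  have "Min (?p ` {..<n}) = L"
    using assms by (intro Min_eqI) (auto simp: high_low_profile_def)
  moreover have "{j \<in> {..<n}. ?p j = L} = {..<n} - S"
    using assms by (auto simp: high_low_profile_def)
  moreover have "card ({..<n} - S) = n - card S"
    using assms by (subst card_Diff_subset) (auto intro: finite_subset)
  ultimately show ?thesis unfolding bertrand_payoff_def Let_def by simp
qed

lemma bertrand_payoff_above_floor:
  assumes "S \<subseteq> {..<n} - {i}" "i < n" "L < y" "y \<le> H"
  shows "bertrand_payoff n ((high_low_profile ({..<n} - {i}) L H S)(i := y)) i =
     (if S = {..<n} - {i} then (if y = H then real_of_int H / real n else real_of_int y) else 0)"
proof -
  let ?p = "(high_low_profile ({..<n} - {i}) L H S)(i := y)"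
  show ?thesis
  proof (cases "S = {..<n} - {i}")
    case False
    then obtain j where "j \<in> {..<n} - {i}" "j \<notin> S" using assms by blast
    then have "Min (?p ` {..<n}) = L"
      using assms by (intro Min_eqI) (auto simp: high_low_profile_def intro!: image_eqI[of _ _ j])
    then show ?thesis unfolding bertrand_payoff_def Let_def using False assms by simp
  next
    case True
    have "Min (?p ` {..<n}) = y"
      using assms True by (intro Min_eqI) (auto simp: high_low_profile_def)
    moreover have "{j \<in> {..<n}. ?p j = y} = (if y = H then {..<n} else {i})"
      using assms True by (auto simp: high_low_profile_def)
    ultimately show ?thesis unfolding bertrand_payoff_def Let_def using True by simp
  qed
qed

lemma exp_payoff_floor:
  assumes "i < n" "L < H"
  shows "exp_payoff n L H beta i L = fB beta n * real_of_int L"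
proof -
  let ?A = "{..<n} - {i}"
  have card_A: "card ?A = n - 1" using assms by simp
  have "exp_payoff n L H beta i L = (\<Sum>S \<in> Pow ?A. beta ^ card S * (1 - beta) ^ (n - 1 - card S)
        * (real_of_int L / real (n - card S)))"
    using assms by (simp add: exp_payoff_eq_sum_Pow bertrand_payoff_floor)
  also have "\<dots> = (\<Sum>k=0..n-1. real ((n - 1) choose k) * (beta ^ k * (1 - beta) ^ (n - 1 - k)
        * (real_of_int L / real (n - k))))"
    using sum_Pow_card[of ?A "\<lambda>k. beta ^ k * (1 - beta) ^ (n - 1 - k) * (real_of_int L / real (n - k))"]
      card_A by simp
  also have "\<dots> = fB beta n * real_of_int L"
    unfolding fB_def sum_distrib_right by (intro sum.cong refl) simp
  finally show ?thesis .
qed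

lemma exp_payoff_above_floor:
  assumes "i < n" "L < y" "y \<le> H"
  shows "exp_payoff n L H beta i y
       = beta ^ (n - 1) * (if y = H then real_of_int H / real n else real_of_int y)"
proof -
  let ?A = "{..<n} - {i}"
  let ?c = "if y = H then real_of_int H / real n else real_of_int y"
  from assms have "L \<noteq> H" by simp
  have "exp_payoff n L H beta i y = (\<Sum>S \<in> Pow ?A. if S = ?A then beta ^ (n - 1) * ?c else 0)"
    unfolding exp_payoff_eq_sum_Pow[OF \<open>L \<noteq> H\<close> assms(1)]
  proof (intro sum.cong refl)
    fix S assume "S \<in> Pow ?A"
    then show "beta ^ card S * (1 - beta) ^ (n - 1 - card S)
        * bertrand_payoff n ((high_low_profile ?A L H S)(i := y)) i
        = (if S = ?A then beta ^ (n - 1) * ?c else 0)"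
      using assms by (simp add: bertrand_payoff_above_floor)
  qed
  then show ?thesis by simp
qed

lemma power_le_fB:
  assumes "n \<ge> 1" "0 \<le> beta" "beta \<le> 1"
  shows "beta ^ (n - 1) \<le> fB beta n"
proof -
  have "beta ^ (n - 1) * (1 - beta) ^ (n - 1 - (n - 1)) * real ((n - 1) choose (n - 1))
          * (1 / real (n - (n - 1))) \<le> fB beta n"
    unfolding fB_def using assms by (intro member_le_sum) auto
  then show ?thesis using assms by simp
qed

lemma exp_payoff_le_iff:
  assumes "n \<ge> 1" "0 \<le> L" "L < H" "0 \<le> beta" "beta \<le> 1" "i < n"
    and "exp_payoff n L H beta i H \<le> c"
  shows "(\<forall>y \<in> {L..H}. exp_payoff n L H beta i y \<le> c) \<longleftrightarrow>
         max (beta ^ (n - 1) * (real_of_int H - 1)) (fB beta n * real_of_int L) \<le> c"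
proof
  assume le: "\<forall>y \<in> {L..H}. exp_payoff n L H beta i y \<le> c"
  have floor: "fB beta n * real_of_int L \<le> c"
    using le[rule_format, of L] assms by (simp add: exp_payoff_floor)
  have "beta ^ (n - 1) * (real_of_int H - 1) \<le> c"
  proof (cases "L = H - 1")
    case True
    have "beta ^ (n - 1) * real_of_int L \<le> fB beta n * real_of_int L"
      using assms power_le_fB by (intro mult_right_mono) auto
    with True floor show ?thesis by simp
  next
    case False
    then have "exp_payoff n L H beta i (H - 1) \<le> c" using le assms by auto
    with False assms show ?thesis by (simp add: exp_payoff_above_floor)
  qed
  with floor show "max (beta ^ (n - 1) * (real_of_int H - 1)) (fB beta n * real_of_int L) \<le> c"
    by simp
next
  assume max_le: "max (beta ^ (n - 1) * (real_of_int H - 1)) (fB beta n * real_of_int L) \<le> c"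
  show "\<forall>y \<in> {L..H}. exp_payoff n L H beta i y \<le> c"
  proof
    fix y assume y: "y \<in> {L..H}"
    consider "y = L" | "L < y" "y < H" | "y = H" using y by force
    then show "exp_payoff n L H beta i y \<le> c"
    proof cases
      case 2
      then have "beta ^ (n - 1) * real_of_int y \<le> beta ^ (n - 1) * (real_of_int H - 1)"
        using assms by (intro mult_left_mono) auto
      with 2 max_le assms show ?thesis by (simp add: exp_payoff_above_floor)
    qed (use assms max_le in \<open>simp_all add: exp_payoff_floor\<close>)
  qed
qed

theorem proposition3p4:
  fixes n :: nat and L H :: int and beta t :: real and i :: nat
  assumes "n \<ge> 2" and "L \<ge> 2" and "H > L"
    and "0 \<le> beta" and "beta \<le> 1" and "t \<ge> 0" and "i < n"
  shows "coop_consistent n L H t beta i \<longleftrightarrow>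
         t \<ge> max (beta ^ (n - 1) * (real_of_int H - 1)) (fB beta n * real_of_int L)
               - beta ^ (n - 1) * real_of_int H / real n"
proof -
  have payoff_H: "exp_payoff n L H beta i H = beta ^ (n - 1) * real_of_int H / real n"
    using assms by (simp add: exp_payoff_above_floor)
  have "coop_consistent n L H t beta i \<longleftrightarrow>
        (\<forall>y \<in> {L..H}. exp_payoff n L H beta i y \<le> exp_payoff n L H beta i H + t)"
    unfolding coop_consistent_def consistent_def ..
  also have "\<dots> \<longleftrightarrow> max (beta ^ (n - 1) * (real_of_int H - 1)) (fB beta n * real_of_int L)
                    \<le> exp_payoff n L H beta i H + t"
    using assms by (intro exp_payoff_le_iff) auto
  finally show ?thesis
    unfolding payoff_H by linarith
qed

end
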